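(* Let $p\ge2$ be a fixed integer and let $\mathcal P$ denote the set of integral partitions all of whose entries are powers $p^i$ ($i\ge0$) of $p$. Let $\lambda,\mu\in\mathcal P$. If $\lambda$ stably embeds into $\mu$, then there exists $\nu\in\mathcal P$ such that $\lambda\times\nu\hookrightarrow\mu\times\nu$.
   Context: An integral partition is a finite nonincreasing sequence of positive integers. The product $\lambda\times\nu$ is the partition of all products $\lambda_i\nu_j$, reordered nonincreasingly. $\lambda=[\lambda_1,\ldots,\lambda_m]$ embeds into $\mu=[\mu_1,\ldots,\mu_n]$, written $\lambda\hookrightarrow\mu$, if there is a map $\varphi:\{1,\ldots,m\}\to\{1,\ldots,n\}$ with $\sum_{i\in\varphi^{-1}(j)}\lambda_i\le\mu_j$ for all $j$. $\lambda$ stably embeds into $\mu$ if there exists an integral partition $\nu$ (arbitrary) with $\lambda\times\nu\hookrightarrow\mu\times\nu$. *)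

theory Defs
  imports Main
begin

definition is_partition :: "nat list \<Rightarrow> bool" where
  "is_partition xs \<longleftrightarrow> (\<forall>x\<in>set xs. 0 < x) \<and> sorted_wrt (\<ge>) xs"

definition pprod :: "nat list \<Rightarrow> nat list \<Rightarrow> nat list" where
  "pprod l n = rev (sort [a * b. a \<leftarrow> l, b \<leftarrow> n])"

text \<open>Embedding, with 0-based indices.\<close>
definition embeds :: "nat list \<Rightarrow> nat list \<Rightarrow> bool" where
  "embeds l m \<longleftrightarrow> (\<exists>\<phi> :: nat \<Rightarrow> nat.
      (\<forall>i < length l. \<phi> i < length m) \<and>
      (\<forall>j < length m. (\<Sum>i\<in>{i. i < length l \<and> \<phi> i = j}. l ! i) \<le> m ! j))"

definition stably_embeds :: "nat list \<Rightarrow> nat list \<Rightarrow> bool" where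
  "stably_embeds l m \<longleftrightarrow>
     (\<exists>\<nu>. is_partition \<nu> \<and> \<nu> \<noteq> [] \<and> embeds (pprod l \<nu>) (pprod m \<nu>))"

definition pow_partition :: "nat \<Rightarrow> nat list \<Rightarrow> bool" where
  "pow_partition p l \<longleftrightarrow> is_partition l \<and> (\<forall>x\<in>set l. \<exists>i::nat. x = p ^ i)"

end

theory Submission
  imports Defs "HOL-Library.Multiset" "HOL-Library.Log_Nat"
begin

(* Write e = floorlog p (the number of base-p digits): it is monotone, and e (p^k * y) = e y + k.
   Given any witness \<nu> of the stable embedding and M large, replace each entry y of \<nu> by
   y * p^(M - e y) copies of p^(e y). For a power a of p, the entry a * y of \<lambda> \<times> \<nu> is then replaced
   in the new product by exactly the pieces of a * y, so it suffices that cutting every part x into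
   x * p^(M - e x) pieces p^(e x) preserves embeddings. The items x in a bin c give pieces
   p^(e x) \<le> p^(e c) of total (\<Sum>x) * p^M \<le> c * p^M, and such powers of p pack greedily into the
   c * p^(M - e c) pieces p^(e c) of c, because they form a divisibility chain. *)

lemma member_le_sum_mset:
  fixes x :: "'a::canonically_ordered_monoid_add"
  shows "x \<in># S \<Longrightarrow> x \<le> \<Sum>\<^sub># S"
  by (metis sum_mset.remove le_iff_add)

lemma sum_mset_sum_mset:
  fixes F :: "'a \<Rightarrow> 'b::comm_monoid_add multiset"
  shows "\<Sum>\<^sub># (\<Sum>x\<in>#S. F x) = (\<Sum>x\<in>#S. \<Sum>\<^sub># (F x))"
  by (induction S) auto

lemma image_mset_sum_mset: "image_mset f (\<Sum>\<^sub># Ms) = (\<Sum>M\<in>#Ms. image_mset f M)"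
  by (induction Ms) auto

lemma submset_mset_set_eq_mset_set:
  assumes "finite I" and "A \<subseteq># mset_set I"
  shows "A = mset_set (set_mset A)"
proof (rule multiset_eqI)
  fix x
  have "count A x \<le> 1"
    using mset_subset_eq_count[OF assms(2), of x] by (simp add: count_mset_set' split: if_splits)
  then show "count A x = count (mset_set (set_mset A)) x"
    by (simp add: count_mset_set' le_Suc_eq count_eq_zero_iff)
qed

lemma image_mset_mset_set_eq_plusE:
  assumes "finite I" and "image_mset a (mset_set I) = S + R"
  obtains K where "K \<subseteq> I" "image_mset a (mset_set K) = S" "image_mset a (mset_set (I - K)) = R"
proof -
  obtain S' R' where split: "mset_set I = S' + R'" "S = image_mset a S'" "R = image_mset a R'"
    using image_mset_eq_plusD[OF assms(2)] by blast
  define K where "K = set_mset S'"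
  have "S' \<subseteq># mset_set I" using split(1) by simp
  then have "S' = mset_set K" and "K \<subseteq> I"
    using submset_mset_set_eq_mset_set[OF assms(1)] assms(1) K_def by (auto dest: mset_subset_eqD)
  moreover have "R' = mset_set (I - K)"
    using split(1) \<open>S' = mset_set K\<close> \<open>K \<subseteq> I\<close> assms(1) by (simp add: mset_set_Diff)
  ultimately show ?thesis using that split by blast
qed

lemma sum_mset_mset_set_fibers:
  assumes "finite I" and "finite J" and "\<forall>i\<in>I. \<phi> i \<in> J"
  shows "(\<Sum>j\<in>#mset_set J. mset_set {i\<in>I. \<phi> i = j}) = mset_set I"
proof (rule multiset_eqI)
  fix x
  have "count (\<Sum>j\<in>#mset_set J. mset_set {i\<in>I. \<phi> i = j}) x
      = (\<Sum>j\<in>J. if x \<in> I \<and> \<phi> x = j then 1 else 0)"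
    using assms(1) by (simp add: sum_unfold_sum_mset[symmetric] count_sum count_mset_set')
  also have "\<dots> = count (mset_set I) x"
    using assms by (auto simp: sum.delta count_mset_set')
  finally show "count (\<Sum>j\<in>#mset_set J. mset_set {i\<in>I. \<phi> i = j}) x = count (mset_set I) x" .
qed

(* B lists the bins of Y, each paired with the multiset of items of X placed into it. *)
definition mset_embeds :: "nat multiset \<Rightarrow> nat multiset \<Rightarrow> bool" where
  "mset_embeds X Y \<longleftrightarrow> (\<exists>B :: (nat \<times> nat multiset) multiset.
     image_mset fst B = Y \<and> \<Sum>\<^sub># (image_mset snd B) = X \<and> (\<forall>(c, S)\<in>#B. \<Sum>\<^sub># S \<le> c))"

lemma mset_embeds_empty [simp]: "mset_embeds {#} {#}"
  unfolding mset_embeds_def by (intro exI[of _ "{#}"]) simp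

lemma mset_embeds_union:
  assumes "mset_embeds X1 Y1" and "mset_embeds X2 Y2"
  shows "mset_embeds (X1 + X2) (Y1 + Y2)"
proof -
  obtain B1 B2
    where "image_mset fst B1 = Y1" "\<Sum>\<^sub># (image_mset snd B1) = X1" "\<forall>(c, S)\<in>#B1. \<Sum>\<^sub># S \<le> c"
      and "image_mset fst B2 = Y2" "\<Sum>\<^sub># (image_mset snd B2) = X2" "\<forall>(c, S)\<in>#B2. \<Sum>\<^sub># S \<le> c"
    using assms unfolding mset_embeds_def by blast
  then show ?thesis
    unfolding mset_embeds_def by (intro exI[of _ "B1 + B2"]) auto
qed

lemma mset_embeds_single_bin: "\<Sum>\<^sub># S \<le> c \<Longrightarrow> mset_embeds S {#c#}"
  unfolding mset_embeds_def by (intro exI[of _ "{#(c, S)#}"]) simp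

lemma mset_embeds_sum_mset:
  "(\<And>z. z \<in># Z \<Longrightarrow> mset_embeds (f z) (g z)) \<Longrightarrow> mset_embeds (\<Sum>z\<in>#Z. f z) (\<Sum>z\<in>#Z. g z)"
  by (induction Z) (auto intro: mset_embeds_union)

lemma mset_embeds_empty_replicate: "mset_embeds {#} (replicate_mset n c)"
proof (induction n)
  case (Suc n)
  then show ?case using mset_embeds_union[OF mset_embeds_single_bin[of "{#}" c]] by fastforce
qed simp

lemma mset_embeds_image_mset_setI:
  assumes "finite I" and "finite J" and "\<forall>i\<in>I. \<phi> i \<in> J"
    and "\<forall>j\<in>J. (\<Sum>i\<in>{i\<in>I. \<phi> i = j}. a i) \<le> b j"
  shows "mset_embeds (image_mset a (mset_set I)) (image_mset b (mset_set J))"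
proof -
  let ?B = "image_mset (\<lambda>j. (b j, image_mset a (mset_set {i\<in>I. \<phi> i = j}))) (mset_set J)"
  have "image_mset a (mset_set I) = image_mset a (\<Sum>j\<in>#mset_set J. mset_set {i\<in>I. \<phi> i = j})"
    using sum_mset_mset_set_fibers[OF assms(1-3)] by simp
  then have "\<Sum>\<^sub># (image_mset snd ?B) = image_mset a (mset_set I)"
    by (simp add: image_mset_sum_mset multiset.map_comp comp_def)
  moreover have "\<forall>(c, S)\<in>#?B. \<Sum>\<^sub># S \<le> c"
    using assms(2,4) by (auto simp: sum_unfold_sum_mset)
  ultimately show ?thesis
    unfolding mset_embeds_def by (intro exI[of _ ?B]) (simp add: multiset.map_comp comp_def)
qed

lemma mset_embeds_image_mset_setD:
  assumes "finite I" and "finite J"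
    and "mset_embeds (image_mset a (mset_set I)) (image_mset b (mset_set J))"
  shows "\<exists>\<phi>. (\<forall>i\<in>I. \<phi> i \<in> J) \<and> (\<forall>j\<in>J. (\<Sum>i\<in>{i\<in>I. \<phi> i = j}. a i) \<le> b j)"
  using assms(2,1,3)
proof (induction J arbitrary: I rule: finite_induct)
  case empty
  then show ?case by (auto simp: mset_embeds_def mset_set_empty_iff)
next
  case (insert j J)
  obtain B where B: "image_mset fst B = image_mset b (mset_set (insert j J))"
    "\<Sum>\<^sub># (image_mset snd B) = image_mset a (mset_set I)" "\<forall>(c, S)\<in>#B. \<Sum>\<^sub># S \<le> c"
    using insert.prems(2) unfolding mset_embeds_def by blast
  have "b j \<in># image_mset fst B" using B(1) insert.hyps(1) by simp
  then obtain z B' where z: "B = add_mset z B'" "fst z = b j"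
    by (metis image_iff multi_member_split set_image_mset)
  obtain K where K: "K \<subseteq> I" "image_mset a (mset_set K) = snd z"
      "image_mset a (mset_set (I - K)) = \<Sum>\<^sub># (image_mset snd B')"
    using image_mset_mset_set_eq_plusE[OF insert.prems(1)] B(2) z(1)
    by (metis sum_mset.insert image_mset_add_mset)
  have "mset_embeds (image_mset a (mset_set (I - K))) (image_mset b (mset_set J))"
    unfolding mset_embeds_def using B z insert.hyps K(3) by (intro exI[of _ B']) auto
  then obtain \<psi> where \<psi>: "\<forall>i\<in>I - K. \<psi> i \<in> J" "\<forall>j\<in>J. (\<Sum>i\<in>{i\<in>I - K. \<psi> i = j}. a i) \<le> b j"
    using insert.IH insert.prems(1) by blast
  define \<phi> where "\<phi> i = (if i \<in> K then j else \<psi> i)" for i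
  have "{i\<in>I. \<phi> i = j} = K"
    using K(1) \<psi>(1) insert.hyps(2) by (auto simp: \<phi>_def)
  moreover have "(\<Sum>i\<in>K. a i) \<le> b j"
    using K(2) B(3) z by (auto simp: sum_unfold_sum_mset)
  moreover have "{i\<in>I. \<phi> i = j'} = {i\<in>I - K. \<psi> i = j'}" if "j' \<in> J" for j'
    using that insert.hyps(2) by (auto simp: \<phi>_def)
  ultimately show ?case
    using \<psi> by (intro exI[of _ \<phi>]) (auto simp: \<phi>_def)
qed

lemma mset_eq_image_mset_nth: "mset l = image_mset (nth l) (mset_set {..<length l})"
  by (metis map_nth mset_map mset_upt lessThan_atLeast0)

lemma embeds_iff_mset_embeds: "embeds l m \<longleftrightarrow> mset_embeds (mset l) (mset m)"
proof -
  have fiber: "{i. i < length l \<and> \<phi> i = j} = {i\<in>{..<length l}. \<phi> i = j}"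
    for \<phi> :: "nat \<Rightarrow> nat" and j
    by auto
  show ?thesis
    unfolding embeds_def fiber mset_eq_image_mset_nth[of l] mset_eq_image_mset_nth[of m]
    using mset_embeds_image_mset_setI[of "{..<length l}" "{..<length m}" _ "nth l" "nth m"]
      mset_embeds_image_mset_setD[of "{..<length l}" "{..<length m}" "nth l" "nth m"]
    by auto (meson lessThan_iff)
qed

lemma powers_ex_submultiset_sum:
  fixes p t :: nat
  assumes "1 < p" and "\<forall>x\<in>#S. \<exists>k. x = p ^ k" and "\<forall>x\<in>#S. x dvd t" and "t \<le> \<Sum>\<^sub># S"
  shows "\<exists>T. T \<subseteq># S \<and> \<Sum>\<^sub># T = t"
  using assms(2-)
proof (induction S arbitrary: t rule: multiset_induct_max)
  case empty
  then show ?case by simp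
next
  case (add x S)
  show ?case
  proof (cases "x \<le> t")
    case True
    \<comment> \<open>The largest power x is divisible by all others, so they still divide t - x.\<close>
    have "y dvd x" if "y \<in># S" for y
    proof -
      obtain i j where "y = p ^ i" "x = p ^ j"
        using add.prems(1) \<open>y \<in># S\<close> by auto
      moreover have "y \<le> x" using add.hyps \<open>y \<in># S\<close> by blast
      ultimately show "y dvd x" using assms(1) by (simp add: le_imp_power_dvd)
    qed
    then have "\<forall>y\<in>#S. y dvd t - x" using add.prems(2) by (simp add: dvd_diff_nat)
    moreover have "t - x \<le> \<Sum>\<^sub># S" using add.prems(3) by simp
    moreover have "\<forall>y\<in>#S. \<exists>k. y = p ^ k" using add.prems(1) by simp
    ultimately obtain T where "T \<subseteq># S" "\<Sum>\<^sub># T = t - x"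
      using add.IH by blast
    then show ?thesis using True by (intro exI[of _ "add_mset x T"]) auto
  next
    case False
    then have "t = 0" using add.prems(2) by (auto dest: dvd_imp_le)
    then show ?thesis by (intro exI[of _ "{#}"]) simp
  qed
qed

lemma powers_mset_embeds_replicate:
  fixes p :: nat
  assumes "1 < p" and "\<forall>x\<in>#S. \<exists>k\<le>e. x = p ^ k" and "\<Sum>\<^sub># S \<le> n * p ^ e"
  shows "mset_embeds S (replicate_mset n (p ^ e))"
  using assms(2-)
proof (induction n arbitrary: S)
  case 0
  then show ?case using assms(1) by (cases S) auto
next
  case (Suc n)
  show ?case
  proof (cases "\<Sum>\<^sub># S \<le> p ^ e")
    case True
    then show ?thesis
      using mset_embeds_union[OF mset_embeds_single_bin mset_embeds_empty_replicate] by fastforce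
  next
    case False
    have "\<forall>x\<in>#S. \<exists>k. x = p ^ k" "\<forall>x\<in>#S. x dvd p ^ e"
      using Suc.prems(1) by (auto simp: le_imp_power_dvd)
    then obtain T where T: "T \<subseteq># S" "\<Sum>\<^sub># T = p ^ e"
      using powers_ex_submultiset_sum[OF assms(1)] False by (meson nle_le)
    then have "\<Sum>\<^sub># S = p ^ e + \<Sum>\<^sub># (S - T)"
      by (metis subset_mset.add_diff_inverse sum_mset.union)
    then have "\<Sum>\<^sub># (S - T) \<le> n * p ^ e"
      using Suc.prems(2) by simp
    moreover have "\<forall>x\<in>#S - T. \<exists>k\<le>e. x = p ^ k" using Suc.prems(1) by (meson in_diffD)
    ultimately have "mset_embeds (S - T) (replicate_mset n (p ^ e))" using Suc.IH by blast
    from mset_embeds_union[OF mset_embeds_single_bin[of T "p ^ e"] this] T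
    show ?thesis by (simp add: subset_mset.add_diff_inverse)
  qed
qed

definition power_pieces :: "nat \<Rightarrow> nat \<Rightarrow> nat \<Rightarrow> nat multiset" where
  "power_pieces p M x = replicate_mset (x * p ^ (M - floorlog p x)) (p ^ floorlog p x)"

lemma sum_mset_power_pieces: "floorlog p x \<le> M \<Longrightarrow> \<Sum>\<^sub># (power_pieces p M x) = x * p ^ M"
  unfolding power_pieces_def by (simp add: mult.assoc power_add[symmetric])

lemma power_pieces_mult_power:
  assumes "1 < p" and "floorlog p (p ^ k * y) \<le> M"
  shows "power_pieces p M (p ^ k * y) = image_mset ((*) (p ^ k)) (power_pieces p M y)"
proof (cases "y = 0")
  case True
  then show ?thesis by (simp add: power_pieces_def)
next
  case False
  then have log: "floorlog p (p ^ k * y) = k + floorlog p y"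
    using assms(1) by (simp add: mult.commute)
  then have "M - floorlog p y = (M - floorlog p (p ^ k * y)) + k"
    using assms(2) by simp
  then have count: "p ^ k * y * p ^ (M - floorlog p (p ^ k * y)) = y * p ^ (M - floorlog p y)"
    by (simp add: power_add)
  have "power_pieces p M (p ^ k * y)
      = replicate_mset (p ^ k * y * p ^ (M - floorlog p (p ^ k * y))) (p ^ floorlog p (p ^ k * y))"
    by (simp only: power_pieces_def)
  also have "\<dots> = replicate_mset (y * p ^ (M - floorlog p y)) (p ^ k * p ^ floorlog p y)"
    unfolding count unfolding log power_add ..
  finally show ?thesis by (simp add: power_pieces_def)
qed

lemma sum_power_pieces_mult_power:
  assumes "1 < p" and "\<forall>y\<in>#N. floorlog p (p ^ k * y) \<le> M"
  shows "(\<Sum>y\<in>#N. power_pieces p M (p ^ k * y))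
    = image_mset ((*) (p ^ k)) (\<Sum>y\<in>#N. power_pieces p M y)"
  using assms by (simp add: power_pieces_mult_power image_mset_sum_mset multiset.map_comp comp_def
      cong: image_mset_cong)

lemma mset_embeds_power_pieces_bin:
  fixes p :: nat
  assumes "1 < p" and "\<Sum>\<^sub># S \<le> c" and "floorlog p c \<le> M"
  shows "mset_embeds (\<Sum>x\<in>#S. power_pieces p M x) (power_pieces p M c)"
proof -
  have log_le: "floorlog p x \<le> floorlog p c" if "x \<in># S" for x
    using that assms(2) by (meson floorlog_mono le_trans member_le_sum_mset)
  then have powers: "\<forall>w\<in>#(\<Sum>x\<in>#S. power_pieces p M x). \<exists>k\<le>floorlog p c. w = p ^ k"
    by (auto simp: power_pieces_def)
  have "floorlog p x \<le> M" if "x \<in># S" for x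
    using log_le[OF that] assms(3) by linarith
  then have "\<Sum>\<^sub># (\<Sum>x\<in>#S. power_pieces p M x) = (\<Sum>x\<in>#S. x * p ^ M)"
    unfolding sum_mset_sum_mset by (simp add: sum_mset_power_pieces cong: image_mset_cong)
  also have "\<dots> \<le> c * p ^ M"
    using assms(2) by (simp add: sum_mset_distrib_right[symmetric])
  also have "\<dots> = c * p ^ (M - floorlog p c) * p ^ floorlog p c"
    using assms(3) by (simp add: mult.assoc flip: power_add)
  finally show ?thesis
    unfolding power_pieces_def[of p M c] by (rule powers_mset_embeds_replicate[OF assms(1) powers])
qed

lemma mset_embeds_power_pieces:
  fixes p :: nat
  assumes "1 < p" and "mset_embeds X Y" and "\<forall>y\<in>#Y. floorlog p y \<le> M"
  shows "mset_embeds (\<Sum>x\<in>#X. power_pieces p M x) (\<Sum>y\<in>#Y. power_pieces p M y)"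
proof -
  obtain B
    where B: "image_mset fst B = Y" "\<Sum>\<^sub># (image_mset snd B) = X" "\<forall>(c, S)\<in>#B. \<Sum>\<^sub># S \<le> c"
    using assms(2) unfolding mset_embeds_def by blast
  have "mset_embeds (\<Sum>x\<in>#S. power_pieces p M x) (power_pieces p M c)" if "(c, S) \<in># B" for c S
  proof (rule mset_embeds_power_pieces_bin[OF assms(1)])
    show "\<Sum>\<^sub># S \<le> c" using bspec[OF B(3) that] by simp
    have "c \<in># Y" unfolding B(1)[symmetric] using that by (metis fst_conv image_eqI set_image_mset)
    then show "floorlog p c \<le> M" using assms(3) by blast
  qed
  then have "mset_embeds (\<Sum>z\<in>#B. \<Sum>x\<in>#snd z. power_pieces p M x)
      (\<Sum>z\<in>#B. power_pieces p M (fst z))"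
    by (intro mset_embeds_sum_mset) auto
  moreover have "(\<Sum>z\<in>#B. power_pieces p M (fst z)) = (\<Sum>y\<in>#Y. power_pieces p M y)"
    unfolding B(1)[symmetric] by (simp add: multiset.map_comp comp_def)
  moreover have "(\<Sum>z\<in>#B. \<Sum>x\<in>#snd z. power_pieces p M x) = (\<Sum>x\<in>#X. power_pieces p M x)"
    unfolding B(2)[symmetric] by (induction B) auto
  ultimately show ?thesis by simp
qed

lemma mset_pprod: "mset (pprod l n) = (\<Sum>a\<in>#mset l. image_mset ((*) a) (mset n))"
  unfolding pprod_def by (induction l) auto

lemma mult_mem_pprod: "a \<in> set l \<Longrightarrow> b \<in> set n \<Longrightarrow> a * b \<in> set (pprod l n)"
  unfolding pprod_def by auto

lemma pow_partition_rev_sorted_list_of_multiset: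
  assumes "0 < p" and "\<forall>x\<in>#N. \<exists>k. x = p ^ k"
  shows "pow_partition p (rev (sorted_list_of_multiset N))"
  using assms unfolding pow_partition_def is_partition_def by (auto simp: sorted_wrt_rev)

lemma sum_power_pieces_pprod:
  fixes p :: nat
  assumes "1 < p" and "\<forall>a\<in>set l. \<exists>k. a = p ^ k"
    and "\<forall>a\<in>set l. \<forall>y\<in>set n. floorlog p (a * y) \<le> M"
    and "mset n' = (\<Sum>y\<in>#mset n. power_pieces p M y)"
  shows "(\<Sum>x\<in>#mset (pprod l n). power_pieces p M x) = mset (pprod l n')"
  using assms(2,3)
proof (induction l)
  case Nil
  then show ?case by (simp add: pprod_def)
next
  case (Cons a l)
  then obtain k where "a = p ^ k" by auto
  then have "(\<Sum>y\<in>#mset n. power_pieces p M (a * y)) = image_mset ((*) a) (mset n')"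
    using sum_power_pieces_mult_power[OF assms(1)] Cons.prems(2) assms(4) by simp
  with Cons show ?case by (simp add: mset_pprod multiset.map_comp comp_def)
qed

theorem theorem3p3:
  fixes p :: nat and lam mu :: "nat list"
  assumes "p \<ge> 2"
    and "pow_partition p lam" and "pow_partition p mu"
    and "stably_embeds lam mu"
  shows "\<exists>\<nu>. pow_partition p \<nu> \<and> \<nu> \<noteq> [] \<and> embeds (pprod lam \<nu>) (pprod mu \<nu>)"
proof -
  have p: "1 < p" using assms(1) by simp
  obtain \<nu> where \<nu>: "is_partition \<nu>" "\<nu> \<noteq> []" "embeds (pprod lam \<nu>) (pprod mu \<nu>)"
    using assms(4) unfolding stably_embeds_def by blast
  define M where "M = floorlog p (sum_list (pprod lam \<nu> @ pprod mu \<nu>))"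
  define \<nu>' where "\<nu>' = rev (sorted_list_of_multiset (\<Sum>y\<in>#mset \<nu>. power_pieces p M y))"
  have M: "floorlog p x \<le> M" if "x \<in> set (pprod lam \<nu> @ pprod mu \<nu>)" for x
    unfolding M_def using that by (intro floorlog_mono member_le_sum_list) auto
  have "mset_embeds (\<Sum>x\<in>#mset (pprod lam \<nu>). power_pieces p M x)
      (\<Sum>x\<in>#mset (pprod mu \<nu>). power_pieces p M x)"
    using \<nu>(3) M by (intro mset_embeds_power_pieces[OF p]) (auto simp: embeds_iff_mset_embeds)
  moreover have "(\<Sum>x\<in>#mset (pprod l \<nu>). power_pieces p M x) = mset (pprod l \<nu>')"
    if "pow_partition p l" and "\<forall>a\<in>set l. \<forall>y\<in>set \<nu>. floorlog p (a * y) \<le> M" for l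
    using that by (intro sum_power_pieces_pprod[OF p]) (auto simp: pow_partition_def \<nu>'_def)
  moreover have "\<forall>a\<in>set lam. \<forall>y\<in>set \<nu>. floorlog p (a * y) \<le> M"
    and "\<forall>a\<in>set mu. \<forall>y\<in>set \<nu>. floorlog p (a * y) \<le> M"
    by (simp_all add: M mult_mem_pprod)
  ultimately have "embeds (pprod lam \<nu>') (pprod mu \<nu>')"
    using assms(2,3) by (simp add: embeds_iff_mset_embeds)
  moreover have "pow_partition p \<nu>'"
    unfolding \<nu>'_def using p
    by (intro pow_partition_rev_sorted_list_of_multiset) (auto simp: power_pieces_def)
  moreover have "mset \<nu>' \<noteq> {#}"
    using \<nu>(1,2) p by (cases \<nu>) (auto simp: \<nu>'_def power_pieces_def is_partition_def)
  then have "\<nu>' \<noteq> []" by auto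
  ultimately show ?thesis by blast
qed

end
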